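(* Let $\mathcal{I}$ be an interval hypergraph on $[n]$ closed under intersection, and let $A,B$ be acyclic orientations of $\mathcal{I}$. The following are equivalent: (a) $A\le B$ in $P_{\mathcal{I}}$; (b) $A(I)\le B(I)$ for all $I\in\mathcal{I}$; (c) $\sigma_A\le\tau_B$ in the weak order; (d) for all $i<j$ in $[n]$, $j\prec_A i$ implies $i\not\prec_B j$.
   Context: An interval hypergraph $\mathcal{I}$ on $[n]$ is a collection of intervals of $[n]$ containing all singletons; it is closed under intersection if $I,J\in\mathcal{I}$, $I\cap J\ne\varnothing$ imply $I\cap J\in\mathcal{I}$. An orientation is a map $O:\mathcal{I}\to[n]$ with $O(I)\in I$; it is acyclic if there are no $H_1,\dots,H_k$, $k\ge2$, with $O(H_{i+1})\in H_i\setminus\{O(H_i)\}$ for $i\in[k-1]$ and $O(H_1)\in H_k\setminus\{O(H_k)\}$. Orientations $O\ne O'$ are related by an increasing flip (from $O$ to $O'$) if there exist $1\le i<j\le n$ such that for all $H$: if $O(H)\ne O'(H)$ then $O(H)=i$, $O'(H)=j$; and if $\{i,j\}\subseteq H$ then $O(H)=i\iff O'(H)=j$. $P_{\mathcal{I}}$ is the transitive closure of the increasing flip relation on acyclic orientations. For a permutation $\pi$, $\mathrm{Or}_\pi(I)=\pi(\min\{j:\pi(j)\in I\})$; for each acyclic orientation $A$ the fiber $\{\pi:\mathrm{Or}_\pi=A\}$ is an interval of the weak order, denoted $[\sigma_A,\tau_A]$. The partial order $\prec_A$ on $[n]$ is the transitive closure of $A(I)\prec_A h$ for $I\in\mathcal{I}$,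 $h\in I\setminus\{A(I)\}$. *)

theory Defs
  imports Main "HOL-Combinatorics.Permutations"
begin

definition interval_hypergraph :: "nat \<Rightarrow> nat set set \<Rightarrow> bool" where
  "interval_hypergraph n \<I> \<longleftrightarrow>
     (\<forall>I\<in>\<I>. \<exists>a b. 1 \<le> a \<and> a \<le> b \<and> b \<le> n \<and> I = {a..b}) \<and>
     (\<forall>i\<in>{1..n}. {i} \<in> \<I>)"

definition closed_under_intersection :: "nat set set \<Rightarrow> bool" where
  "closed_under_intersection \<I> \<longleftrightarrow>
     (\<forall>I\<in>\<I>. \<forall>J\<in>\<I>. I \<inter> J \<noteq> {} \<longrightarrow> I \<inter> J \<in> \<I>)"

text \<open>An orientation is a map on the hyperedges; outside the hypergraph it is
  normalised to the constant undefined, so orientations are genuine functions on the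
  hypergraph and equality of orientations is equality of these maps.\<close>

definition orientation :: "nat set set \<Rightarrow> (nat set \<Rightarrow> nat) \<Rightarrow> bool" where
  "orientation \<I> Ori \<longleftrightarrow> (\<forall>I\<in>\<I>. Ori I \<in> I) \<and> (\<forall>I. I \<notin> \<I> \<longrightarrow> Ori I = undefined)"

text \<open>Cycles H_1,...,H_k are indexed 0..k-1 here.\<close>

definition acyclic_orientation :: "nat set set \<Rightarrow> (nat set \<Rightarrow> nat) \<Rightarrow> bool" where
  "acyclic_orientation \<I> Ori \<longleftrightarrow> orientation \<I> Ori \<and>
     \<not> (\<exists>k (H :: nat \<Rightarrow> nat set). k \<ge> 2 \<and> (\<forall>i<k. H i \<in> \<I>) \<and>
           (\<forall>i<k. Ori (H ((i + 1) mod k)) \<in> H i - {Ori (H i)}))"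

definition increasing_flip :: "nat \<Rightarrow> nat set set \<Rightarrow> (nat set \<Rightarrow> nat) \<Rightarrow> (nat set \<Rightarrow> nat) \<Rightarrow> bool" where
  "increasing_flip n \<I> Ori Ori' \<longleftrightarrow> Ori \<noteq> Ori' \<and>
     (\<exists>i j. 1 \<le> i \<and> i < j \<and> j \<le> n \<and>
        (\<forall>H\<in>\<I>. (Ori H \<noteq> Ori' H \<longrightarrow> Ori H = i \<and> Ori' H = j) \<and>
                 ({i, j} \<subseteq> H \<longrightarrow> (Ori H = i \<longleftrightarrow> Ori' H = j))))"

definition P_le :: "nat \<Rightarrow> nat set set \<Rightarrow> (nat set \<Rightarrow> nat) \<Rightarrow> (nat set \<Rightarrow> nat) \<Rightarrow> bool" where
  "P_le n \<I> A B \<longleftrightarrow>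
     (A, B) \<in> {(Ori, Ori'). acyclic_orientation \<I> Ori \<and> acyclic_orientation \<I> Ori' \<and>
                        increasing_flip n \<I> Ori Ori'}\<^sup>*"

text \<open>Permutations of [n] are maps permuting {1..n}; pi(j) is the j-th letter of the word.\<close>

definition Or_perm :: "(nat \<Rightarrow> nat) \<Rightarrow> nat set \<Rightarrow> nat" where
  "Or_perm \<pi> I = \<pi> (LEAST j. j \<ge> 1 \<and> \<pi> j \<in> I)"

text \<open>(Right) weak order: inclusion of inversion sets, inversions being pairs of values
  a < b such that b occurs before a in the word of pi.\<close>

definition inversions :: "(nat \<Rightarrow> nat) \<Rightarrow> (nat \<times> nat) set" where
  "inversions \<pi> = {(a, b). a < b \<and> inv \<pi> b < inv \<pi> a}"

definition weak_le :: "nat \<Rightarrow> (nat \<Rightarrow> nat) \<Rightarrow> (nat \<Rightarrow> nat) \<Rightarrow> bool" where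
  "weak_le n \<pi> \<rho> \<longleftrightarrow> \<pi> permutes {1..n} \<and> \<rho> permutes {1..n} \<and> inversions \<pi> \<subseteq> inversions \<rho>"

definition fiber :: "nat \<Rightarrow> nat set set \<Rightarrow> (nat set \<Rightarrow> nat) \<Rightarrow> (nat \<Rightarrow> nat) set" where
  "fiber n \<I> A = {\<pi>. \<pi> permutes {1..n} \<and> (\<forall>I\<in>\<I>. Or_perm \<pi> I = A I)}"

definition sigma_of :: "nat \<Rightarrow> nat set set \<Rightarrow> (nat set \<Rightarrow> nat) \<Rightarrow> (nat \<Rightarrow> nat)" where
  "sigma_of n \<I> A = (THE \<pi>. \<pi> \<in> fiber n \<I> A \<and> (\<forall>\<rho>\<in>fiber n \<I> A. weak_le n \<pi> \<rho>))"

definition tau_of :: "nat \<Rightarrow> nat set set \<Rightarrow> (nat set \<Rightarrow> nat) \<Rightarrow> (nat \<Rightarrow> nat)" where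
  "tau_of n \<I> A = (THE \<pi>. \<pi> \<in> fiber n \<I> A \<and> (\<forall>\<rho>\<in>fiber n \<I> A. weak_le n \<rho> \<pi>))"

definition prec :: "nat set set \<Rightarrow> (nat set \<Rightarrow> nat) \<Rightarrow> (nat \<times> nat) set" where
  "prec \<I> A = {(A I, h) | I h. I \<in> \<I> \<and> h \<in> I - {A I}}\<^sup>+"

end

theory Submission
  imports Defs
begin

text \<open>For an acyclic orientation A, the permutations pi with Or_pi = A are exactly
  the linear extensions of prec_A, and for an interval hypergraph prec_A is convex: if x prec_A y,
  then x prec_A z for every z strictly between x and y. Convexity allows breaking all ties between
  prec_A-incomparable letters uniformly, by the natural order of [n] or by its reverse; this yields
  sigma_A and tau_A, with inversion sets {(a, b). a < b, b prec_A a} and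
  {(a, b). a < b, not a prec_A b}. Hence (c) and (d) both say that the first set for A lies in
  the second set for B.
  (c) implies (a): a saturated chain from sigma_A up to tau_B in the weak order swaps adjacent
  letters x < y, and such a swap changes Or_pi by an increasing flip or not at all.
  (a) implies (b) because increasing flips only increase values.
  (b) implies (d): take i < j with j prec_A i and i prec_B j and j - i minimal. Then both chains
  jump over the gap between i and j, through hyperedges H and K containing i and j, and
  acyclicity forces A L \<ge> j > i \<ge> B L on L = H \<inter> K.\<close>

section \<open>Permutations, inversions and the weak order\<close>

lemma inversions_subset:
  assumes "\<pi> permutes {1..n}"
  shows "inversions \<pi> \<subseteq> {1..n} \<times> {1..n}"
proof (rule subrelI)
  fix a b assume "(a, b) \<in> inversions \<pi>"
  then have ab: "a < b" "inv \<pi> b < inv \<pi> a"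
    unfolding inversions_def by auto
  have fix_out: "inv \<pi> x = x" if "x \<notin> {1..n}" for x
    using permutes_not_in[OF permutes_inv[OF assms] that] .
  have stay_in: "inv \<pi> x \<in> {1..n}" if "x \<in> {1..n}" for x
    using permutes_in_image[OF permutes_inv[OF assms]] that by simp
  have a: "a \<in> {1..n}"
  proof (rule ccontr)
    assume "a \<notin> {1..n}"
    then have "a = 0 \<or> n < a" and "inv \<pi> a = a" by (auto simp: fix_out)
    moreover have "b \<notin> {1..n}" if "n < a" using that ab(1) by simp
    ultimately show False using ab fix_out by fastforce
  qed
  have "b \<in> {1..n}"
  proof (rule ccontr)
    assume "b \<notin> {1..n}"
    then have "n < b" "inv \<pi> b = b" using ab(1) a by (auto simp: fix_out)
    then show False using ab(2) stay_in[OF a] by simp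
  qed
  with a show "(a, b) \<in> {1..n} \<times> {1..n}" by simp
qed

lemma rank_eq_card_smaller:
  fixes f :: "nat \<Rightarrow> nat"
  assumes f: "bij_betw f {1..n} {1..n}" and x: "x \<in> {1..n}"
  shows "f x = Suc (card {y \<in> {1..n}. f y < f x})"
proof -
  have fx: "f x \<in> {1..n}"
    using bij_betwE[OF f] x by blast
  have "f ` {y \<in> {1..n}. f y < f x} = {1..<f x}"
  proof
    show "f ` {y \<in> {1..n}. f y < f x} \<subseteq> {1..<f x}"
      using bij_betwE[OF f] by force
    show "{1..<f x} \<subseteq> f ` {y \<in> {1..n}. f y < f x}"
    proof
      fix k assume k: "k \<in> {1..<f x}"
      then have "k \<in> f ` {1..n}"
        using fx bij_betw_imp_surj_on[OF f] by auto
      then show "k \<in> f ` {y \<in> {1..n}. f y < f x}"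
        using k by auto
    qed
  qed
  moreover have "inj_on f {y \<in> {1..n}. f y < f x}"
    using bij_betw_imp_inj_on[OF f] by (rule inj_on_subset) auto
  ultimately have "card {y \<in> {1..n}. f y < f x} = f x - 1"
    by (metis card_atLeastLessThan card_image)
  then show ?thesis
    using fx by simp
qed

lemma permutes_eqI_order:
  assumes "g permutes {1..(n::nat)}" "g' permutes {1..n}"
    and "\<And>x y. x \<in> {1..n} \<Longrightarrow> y \<in> {1..n} \<Longrightarrow> g x < g y \<longleftrightarrow> g' x < g' y"
  shows "g = g'"
proof
  fix x
  show "g x = g' x"
  proof (cases "x \<in> {1..n}")
    case True
    then have "{y \<in> {1..n}. g y < g x} = {y \<in> {1..n}. g' y < g' x}"
      using assms(3) by auto
    then show ?thesis
      using rank_eq_card_smaller[OF permutes_imp_bij[OF assms(1)] True]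
        rank_eq_card_smaller[OF permutes_imp_bij[OF assms(2)] True] by simp
  qed (metis assms(1,2) permutes_not_in)
qed

lemma permutes_eqI_inversions:
  assumes \<pi>: "\<pi> permutes {1..n}" and \<rho>: "\<rho> permutes {1..n}"
    and inv_eq: "inversions \<pi> = inversions \<rho>"
  shows "\<pi> = \<rho>"
proof -
  have "inv \<pi> x < inv \<pi> y \<longleftrightarrow> inv \<rho> x < inv \<rho> y" for x y
  proof -
    have "inj (inv \<pi>)" "inj (inv \<rho>)"
      using permutes_inj[OF permutes_inv[OF \<pi>]] permutes_inj[OF permutes_inv[OF \<rho>]] .
    then have distinct: "inv \<pi> x \<noteq> inv \<pi> y" "inv \<rho> x \<noteq> inv \<rho> y" if "x \<noteq> y"
      using that by (auto dest: injD)
    show ?thesis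
    proof (cases x y rule: linorder_cases)
      case less
      then have "inv \<pi> y < inv \<pi> x \<longleftrightarrow> inv \<rho> y < inv \<rho> x"
        using inv_eq unfolding inversions_def by blast
      then show ?thesis using distinct less by linarith
    next
      case greater
      then have "inv \<pi> x < inv \<pi> y \<longleftrightarrow> inv \<rho> x < inv \<rho> y"
        using inv_eq unfolding inversions_def by blast
      then show ?thesis .
    qed simp
  qed
  then have "inv \<pi> = inv \<rho>"
    using permutes_eqI_order[OF permutes_inv[OF \<pi>] permutes_inv[OF \<rho>]] by blast
  then show ?thesis
    by (metis \<pi> \<rho> permutes_inv_inv)
qed

lemma weak_le_antisym: "weak_le n \<pi> \<rho> \<Longrightarrow> weak_le n \<rho> \<pi> \<Longrightarrow> \<pi> = \<rho>"
  unfolding weak_le_def by (blast intro: permutes_eqI_inversions)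

lemma permutes_of_strict_linear_order:
  assumes L: "strict_linear_order_on {1..(n::nat)} L"
  obtains \<pi> where "\<pi> permutes {1..n}"
    and "\<And>x y. x \<in> {1..n} \<Longrightarrow> y \<in> {1..n} \<Longrightarrow> inv \<pi> x < inv \<pi> y \<longleftrightarrow> (x, y) \<in> L"
proof -
  have trans: "trans L" and irrefl: "\<And>x. (x, x) \<notin> L"
    and total: "\<And>x y. x \<in> {1..n} \<Longrightarrow> y \<in> {1..n} \<Longrightarrow> x \<noteq> y \<Longrightarrow> (x, y) \<in> L \<or> (y, x) \<in> L"
    using L unfolding strict_linear_order_on_def irrefl_def total_on_def by auto
  define pred where "pred x = {y \<in> {1..n}. (y, x) \<in> L}" for x
  define g where "g x = (if x \<in> {1..n} then Suc (card (pred x)) else x)" for x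
  have g_mono: "g x < g y" if "x \<in> {1..n}" "y \<in> {1..n}" "(x, y) \<in> L" for x y
  proof -
    have "pred x \<subset> pred y"
      using that irrefl transD[OF trans] unfolding pred_def by blast
    then show ?thesis
      using that psubset_card_mono[of "pred y"] unfolding g_def pred_def by simp
  qed
  have g_order: "g x < g y \<longleftrightarrow> (x, y) \<in> L" if "x \<in> {1..n}" "y \<in> {1..n}" for x y
    using g_mono[OF that] g_mono[OF that(2,1)] total[OF that] irrefl
    by (cases "x = y") (auto dest: less_asym)
  have "inj_on g {1..n}"
  proof (rule inj_onI)
    fix x y assume "x \<in> {1..n}" "y \<in> {1..n}" "g x = g y"
    then show "x = y"
      using total[of x y] g_order[of x y] g_order[of y x] by auto
  qed
  moreover have "g ` {1..n} \<subseteq> {1..n}"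
  proof clarify
    fix x assume x: "x \<in> {1..n}"
    then have "pred x \<subset> {1..n}"
      using irrefl unfolding pred_def by blast
    then have "card (pred x) < n"
      using psubset_card_mono[of "{1..n}"] by simp
    then show "g x \<in> {1..n}"
      using x unfolding g_def by simp
  qed
  ultimately have "g ` {1..n} = {1..n}"
    by (simp add: card_image card_subset_eq)
  with \<open>inj_on g {1..n}\<close> have "g permutes {1..n}"
    by (intro bij_imp_permutes) (auto simp: bij_betw_def g_def)
  then show ?thesis
    using that[of "inv g"] g_order by (simp add: permutes_inv permutes_inv_inv)
qed

lemma trans_tiebreak:
  assumes transR: "trans R" and totalR: "total R" and asymR: "\<And>a b. (a, b) \<in> R \<Longrightarrow> (b, a) \<notin> R"
    and transP: "trans P" and asymP: "\<And>a b. (a, b) \<in> P \<Longrightarrow> (b, a) \<notin> P"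
    and convex: "\<And>a b c. (a, b) \<in> P \<Longrightarrow> (a, c) \<in> R \<and> (c, b) \<in> R \<or> (b, c) \<in> R \<and> (c, a) \<in> R
      \<Longrightarrow> (a, c) \<in> P"
  shows "trans (P \<union> (R - P\<inverse>))"
proof (rule transI)
  fix a b c assume ab: "(a, b) \<in> P \<union> (R - P\<inverse>)" and bc: "(b, c) \<in> P \<union> (R - P\<inverse>)"
  show "(a, c) \<in> P \<union> (R - P\<inverse>)"
  proof (cases "(a, c) \<in> P")
    case False
    have "(c, a) \<notin> P"
    proof
      assume ca: "(c, a) \<in> P"
      then have "(c, b) \<in> P" if "(a, b) \<in> P \<or> (a, b) \<in> R \<and> (b, c) \<in> R"
        using that transD[OF transP] convex[OF ca] by blast
      moreover have "(b, a) \<in> P" if "(b, c) \<in> P"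
        using ca that transD[OF transP] by blast
      ultimately show False
        using ab bc asymP by blast
    qed
    moreover have "(a, c) \<in> R"
    proof (rule ccontr)
      assume "(a, c) \<notin> R"
      moreover have "a \<noteq> c"
        using ab bc asymP asymR by blast
      ultimately have ca: "(c, a) \<in> R"
        using totalR unfolding total_on_def by blast
      have "(a, c) \<in> P" if "(a, b) \<in> P" "(b, c) \<in> R"
        using convex[OF that(1)] ca that(2) by blast
      moreover have "(b, a) \<in> P" if "(b, c) \<in> P" "(a, b) \<in> R"
        using convex[OF that(1)] ca that(2) by blast
      ultimately show False
        using ab bc False \<open>(a, c) \<notin> R\<close> transD[OF transR, of a b c] transD[OF transP, of a b c]
        by blast
    qed
    ultimately show ?thesis
      by blast
  qed simp
qed

lemma strict_linear_order_tiebreak: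
  assumes R: "strict_linear_order R" and P: "trans P" "irrefl P"
    and convex: "\<And>a b c. (a, b) \<in> P \<Longrightarrow> (a, c) \<in> R \<and> (c, b) \<in> R \<or> (b, c) \<in> R \<and> (c, a) \<in> R
      \<Longrightarrow> (a, c) \<in> P"
  shows "strict_linear_order (P \<union> (R - P\<inverse>))"
proof -
  have transR: "trans R" and irreflR: "irrefl R" and totalR: "total R"
    using R unfolding strict_linear_order_on_def by auto
  have "trans (P \<union> (R - P\<inverse>))"
  proof (rule trans_tiebreak[OF transR totalR _ P(1) _ convex])
    show "(b, a) \<notin> R" if "(a, b) \<in> R" for a b
      using that transR irreflR transD unfolding irrefl_def by metis
    show "(b, a) \<notin> P" if "(a, b) \<in> P" for a b
      using that P transD unfolding irrefl_def by metis
  qed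
  moreover have "irrefl (P \<union> (R - P\<inverse>))"
    using P(2) irreflR unfolding irrefl_def by blast
  moreover have "total (P \<union> (R - P\<inverse>))"
    using totalR unfolding total_on_def by blast
  ultimately show ?thesis
    unfolding strict_linear_order_on_def by blast
qed

lemma inv_transpose_comp:
  "bij \<pi> \<Longrightarrow> inv (Transposition.transpose x y \<circ> \<pi>) = inv \<pi> \<circ> Transposition.transpose x y"
  by (simp add: o_inv_distrib)

lemma transpose_adjacent_order:
  assumes \<pi>: "bij \<pi>" and adj: "inv \<pi> y = Suc (inv \<pi> x)" and uv: "{u, v} \<noteq> {x, y}"
  shows "inv (Transposition.transpose x y \<circ> \<pi>) u < inv (Transposition.transpose x y \<circ> \<pi>) v
    \<longleftrightarrow> inv \<pi> u < inv \<pi> v"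
proof -
  have inj: "inv \<pi> a = inv \<pi> b \<longleftrightarrow> a = b" for a b
    using bij_imp_bij_inv[OF \<pi>] by (auto dest: bij_is_inj injD)
  have swap: "inv (Transposition.transpose x y \<circ> \<pi>) a = inv \<pi> (Transposition.transpose x y a)" for a
    by (simp add: inv_transpose_comp[OF \<pi>])
  consider "u \<notin> {x, y}" "v \<notin> {x, y}" | "u \<in> {x, y}" "v \<notin> {x, y}"
    | "u \<notin> {x, y}" "v \<in> {x, y}" | "u = v"
    using uv by (auto simp: doubleton_eq_iff)
  then show ?thesis
  proof cases
    case 2
    then show ?thesis using adj inj[of v x] inj[of v y] by (auto simp: swap)
  next
    case 3
    then show ?thesis using adj inj[of u x] inj[of u y] by (auto simp: swap)
  qed (auto simp: swap)
qed

lemma inversions_transpose_adjacent: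
  assumes \<pi>: "bij \<pi>" and xy: "x < y" and adj: "inv \<pi> y = Suc (inv \<pi> x)"
  shows "inversions (Transposition.transpose x y \<circ> \<pi>) = insert (x, y) (inversions \<pi>)"
proof -
  have "(a, b) \<in> inversions (Transposition.transpose x y \<circ> \<pi>)
      \<longleftrightarrow> (a, b) \<in> insert (x, y) (inversions \<pi>)" for a b
  proof (cases "{a, b} = {x, y}")
    case True
    then show ?thesis
      using xy adj unfolding inversions_def inv_transpose_comp[OF \<pi>]
      by (auto simp: doubleton_eq_iff)
  next
    case False
    then have "(a, b) \<noteq> (x, y)" and "{b, a} \<noteq> {x, y}"
      by (auto simp: insert_commute)
    then show ?thesis
      using transpose_adjacent_order[OF \<pi> adj] unfolding inversions_def by auto
  qed
  then show ?thesis by auto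
qed

lemma obtain_adjacent_inversion:
  assumes \<pi>: "\<pi> permutes {1..n}" and \<rho>: "\<rho> permutes {1..n}"
    and sub: "inversions \<pi> \<subset> inversions \<rho>"
  obtains x y where "x < y" "inv \<pi> y = Suc (inv \<pi> x)"
    "(x, y) \<in> inversions \<rho>" "(x, y) \<notin> inversions \<pi>"
proof -
  have inv_\<pi>: "inv \<pi> (\<pi> k) = k" for k
    by (meson \<pi> permutes_inverses(2))
  obtain a b where "(a, b) \<in> inversions \<rho>" "(a, b) \<notin> inversions \<pi>"
    using sub by auto
  then have "a < b" "inv \<rho> b < inv \<rho> a" "\<not> inv \<pi> b < inv \<pi> a"
    unfolding inversions_def by auto
  moreover have "inv \<pi> a \<noteq> inv \<pi> b"
    using \<open>a < b\<close> permutes_inj[OF permutes_inv[OF \<pi>]] by (auto dest: injD)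
  ultimately have ab: "inv \<pi> a < inv \<pi> b" "inv \<rho> b < inv \<rho> a"
    by simp_all
  \<comment> \<open>Read in the order of \<pi>, the positions in \<rho> cannot increase all the way from a to b.\<close>
  define f where "f t = inv \<rho> (\<pi> t)" for t
  have "\<exists>k. f (Suc k) < f k"
  proof (rule ccontr)
    assume "\<nexists>k. f (Suc k) < f k"
    then have "f (inv \<pi> a) \<le> f (inv \<pi> b)"
      using lift_Suc_mono_le[of f] ab(1) by (simp add: not_less)
    then show False
      using ab(2) by (simp add: f_def permutes_inverses(1)[OF \<pi>])
  qed
  then obtain k where k: "inv \<rho> (\<pi> (Suc k)) < inv \<rho> (\<pi> k)"
    unfolding f_def by blast
  have "\<pi> (Suc k) \<noteq> \<pi> k"
    using inv_\<pi> by (metis n_not_Suc_n)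
  moreover have "(\<pi> (Suc k), \<pi> k) \<notin> inversions \<pi>"
    using k sub unfolding inversions_def by auto
  ultimately have "\<pi> k < \<pi> (Suc k)"
    unfolding inversions_def by (simp add: inv_\<pi>)
  then show ?thesis
    using that[of "\<pi> k" "\<pi> (Suc k)"] k unfolding inversions_def by (simp add: inv_\<pi>)
qed

section \<open>Orientations\<close>

definition arcs :: "nat set set \<Rightarrow> (nat set \<Rightarrow> nat) \<Rightarrow> (nat \<times> nat) set" where
  "arcs HH A = {(A I, h) | I h. I \<in> HH \<and> h \<in> I - {A I}}"

lemma prec_eq_trancl_arcs: "prec HH A = (arcs HH A)\<^sup>+"
  unfolding prec_def arcs_def ..

lemma arcsI: "I \<in> HH \<Longrightarrow> h \<in> I \<Longrightarrow> h \<noteq> A I \<Longrightarrow> (A I, h) \<in> arcs HH A"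
  unfolding arcs_def by blast

lemma arcsE:
  assumes "(x, y) \<in> arcs HH A"
  obtains I where "I \<in> HH" "x = A I" "y \<in> I" "y \<noteq> A I"
  using assms unfolding arcs_def by blast

lemma trancl_exit_set:
  assumes "(x, y) \<in> r\<^sup>+" "x \<in> X" "y \<notin> X"
  obtains u v where "(x, u) \<in> r\<^sup>*" "(u, v) \<in> r" "(v, y) \<in> r\<^sup>*" "u \<in> X" "v \<notin> X"
proof -
  have "\<exists>u v. (x, u) \<in> r\<^sup>* \<and> (u, v) \<in> r \<and> (v, y) \<in> r\<^sup>* \<and> u \<in> X \<and> v \<notin> X"
    using assms(1,3)
  proof (induction rule: trancl_induct)
    case (base y)
    then show ?case
      using assms(2) by blast
  next
    case (step y z)
    show ?case
    proof (cases "y \<in> X")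
      case True
      then show ?thesis
        using step by (blast intro: trancl_into_rtrancl)
    next
      case False
      then show ?thesis
        using step by (meson rtrancl.rtrancl_into_rtrancl)
    qed
  qed
  then show ?thesis
    using that by blast
qed

lemma prec_irrefl:
  assumes "acyclic_orientation HH A"
  shows "(x, x) \<notin> prec HH A"
proof
  assume "(x, x) \<in> prec HH A"
  then obtain k where "0 < k" "(x, x) \<in> arcs HH A ^^ k"
    unfolding prec_eq_trancl_arcs by (meson trancl_power)
  then obtain f where k: "0 < k" and f: "f 0 = x" "f k = x" "\<forall>i<k. (f i, f (Suc i)) \<in> arcs HH A"
    by (auto simp: relpow_fun_conv)
  then have "\<forall>i<k. \<exists>I. I \<in> HH \<and> f i = A I \<and> f (Suc i) \<in> I - {A I}"
    unfolding arcs_def by blast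
  then obtain H where H: "\<And>i. i < k \<Longrightarrow> H i \<in> HH \<and> f i = A (H i) \<and> f (Suc i) \<in> H i - {A (H i)}"
    by metis
  have next_arc: "A (H ((i + 1) mod k)) = f (Suc i)" if "i < k" for i
  proof (cases "Suc i < k")
    case False
    then have "Suc i = k" using that by simp
    then show ?thesis using H[OF k] f by simp
  qed (use H in auto)
  have "k \<noteq> 1"
    using H[OF k] f by auto
  then have "k \<ge> 2" and "\<forall>i<k. A (H ((i + 1) mod k)) \<in> H i - {A (H i)}"
    using k H next_arc by auto
  then show False
    using assms H unfolding acyclic_orientation_def by blast
qed

lemma acyclic_orientationI:
  assumes "orientation HH A" and irrefl: "\<And>x. (x, x) \<notin> prec HH A"
  shows "acyclic_orientation HH A"
  unfolding acyclic_orientation_def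
proof (intro conjI assms notI, elim exE conjE)
  fix k and H :: "nat \<Rightarrow> nat set"
  assume k: "k \<ge> 2" and H: "\<forall>i<k. H i \<in> HH"
    and cycle: "\<forall>i<k. A (H ((i + 1) mod k)) \<in> H i - {A (H i)}"
  have arc: "(A (H i), A (H ((i + 1) mod k))) \<in> arcs HH A" if "i < k" for i
    using that H cycle by (blast intro: arcsI)
  have "(A (H 0), A (H i)) \<in> (arcs HH A)\<^sup>*" if "i < k" for i
    using that
  proof (induction i)
    case (Suc i)
    then show ?case
      using arc[of i] by (simp add: rtrancl.rtrancl_into_rtrancl)
  qed simp
  then have "(A (H 0), A (H (k - 1))) \<in> (arcs HH A)\<^sup>*"
    using k by simp
  moreover have "(A (H (k - 1)), A (H 0)) \<in> arcs HH A"
    using arc[of "k - 1"] k by simp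
  ultimately have "(A (H 0), A (H 0)) \<in> (arcs HH A)\<^sup>+"
    by (rule rtrancl_into_trancl1)
  then show False
    using irrefl unfolding prec_eq_trancl_arcs by blast
qed

lemma acyclic_orientation_subset_hyperedge:
  assumes A: "acyclic_orientation HH A" and L: "L \<in> HH" "L \<subseteq> H" and H: "H \<in> HH"
    and w: "w \<in> L" "(w, A H) \<in> (arcs HH A)\<^sup>*"
  shows "A L = A H \<or> A L = w"
proof (rule ccontr)
  assume "\<not> (A L = A H \<or> A L = w)"
  moreover have "A L \<in> L"
    using A L(1) unfolding acyclic_orientation_def orientation_def by simp
  ultimately have "(A H, A L) \<in> arcs HH A" "(A L, w) \<in> arcs HH A"
    using H L w(1) by (auto intro!: arcsI)
  then have "(A L, A L) \<in> prec HH A"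
    unfolding prec_eq_trancl_arcs using w(2)
    by (meson rtrancl_into_trancl1 converse_rtrancl_into_rtrancl)
  then show False
    using prec_irrefl[OF A] by simp
qed

lemma obtain_separating_hyperedge:
  assumes ci: "closed_under_intersection HH"
    and A: "acyclic_orientation HH A" and B: "acyclic_orientation HH B"
    and H: "H \<in> HH" "(j, A H) \<in> (arcs HH A)\<^sup>*" "j \<le> A H"
    and K: "K \<in> HH" "(i, B K) \<in> (arcs HH B)\<^sup>*" "B K \<le> i"
    and ij: "i \<in> H \<inter> K" "j \<in> H \<inter> K"
  obtains L where "L \<in> HH" "B L \<le> i" "j \<le> A L"
proof
  show L: "H \<inter> K \<in> HH"
    using ci H(1) K(1) ij(1) unfolding closed_under_intersection_def by blast
  show "B (H \<inter> K) \<le> i"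
    using acyclic_orientation_subset_hyperedge[OF B L _ K(1) ij(1) K(2)] K(3) by auto
  show "j \<le> A (H \<inter> K)"
    using acyclic_orientation_subset_hyperedge[OF A L _ H(1) ij(2) H(2)] H(3) by auto
qed

lemma P_le_imp_le:
  assumes "P_le n HH A B" "I \<in> HH"
  shows "A I \<le> B I"
  using assms(1) unfolding P_le_def
proof (induction rule: rtrancl_induct)
  case (step B C)
  then obtain i j where "i < j" "B I \<noteq> C I \<longrightarrow> B I = i \<and> C I = j"
    using assms(2) unfolding increasing_flip_def by blast
  then have "B I \<le> C I"
    by (cases "B I = C I") simp_all
  with step.IH show ?case
    by simp
qed simp

lemma Or_perm_eq_iff:
  assumes \<pi>: "\<pi> permutes {1..n}" and I: "I \<subseteq> {1..n}" "I \<noteq> {}"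
  shows "Or_perm \<pi> I = m \<longleftrightarrow> m \<in> I \<and> (\<forall>h\<in>I. inv \<pi> m \<le> inv \<pi> h)"
proof -
  have first: "Or_perm \<pi> I = m" if m: "m \<in> I" "\<forall>h\<in>I. inv \<pi> m \<le> inv \<pi> h" for m
  proof -
    have "(LEAST j. j \<ge> 1 \<and> \<pi> j \<in> I) = inv \<pi> m"
    proof (rule Least_equality)
      have "inv \<pi> m \<in> {1..n}"
        using m(1) I(1) permutes_in_image[OF permutes_inv[OF \<pi>]] by auto
      then show "1 \<le> inv \<pi> m \<and> \<pi> (inv \<pi> m) \<in> I"
        using m(1) permutes_inverses(1)[OF \<pi>] by simp
      show "inv \<pi> m \<le> j" if "1 \<le> j \<and> \<pi> j \<in> I" for j
        using m(2) that permutes_inverses(2)[OF \<pi>] by metis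
    qed
    then show ?thesis
      unfolding Or_perm_def using permutes_inverses(1)[OF \<pi>] by simp
  qed
  obtain m where "m \<in> I" "\<forall>h\<in>I. inv \<pi> m \<le> inv \<pi> h"
    using I(2) ex_has_least_nat[of "\<lambda>h. h \<in> I" _ "inv \<pi>"] by blast
  then show ?thesis
    using first by blast
qed

lemma Or_perm_transpose_adjacent:
  assumes \<pi>: "\<pi> permutes {1..n}" and xy: "x \<in> {1..n}" "y \<in> {1..n}"
    and adj: "inv \<pi> y = Suc (inv \<pi> x)" and I: "I \<subseteq> {1..n}" "I \<noteq> {}"
  shows "Or_perm (Transposition.transpose x y \<circ> \<pi>) I
    = (if Or_perm \<pi> I = x \<and> y \<in> I then y else Or_perm \<pi> I)"
proof -
  let ?\<pi>' = "Transposition.transpose x y \<circ> \<pi>"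
  have \<pi>': "?\<pi>' permutes {1..n}"
    by (rule permutes_compose[OF \<pi> permutes_swap_id[OF xy]])
  have bij: "bij \<pi>"
    using \<pi> by (rule permutes_bij)
  define m where "m = Or_perm \<pi> I"
  have m: "m \<in> I" "\<And>h. h \<in> I \<Longrightarrow> inv \<pi> m \<le> inv \<pi> h"
    using Or_perm_eq_iff[OF \<pi> I, of m] unfolding m_def by auto
  have inj: "inv \<pi> a = inv \<pi> b \<longleftrightarrow> a = b" for a b
    using permutes_inj[OF permutes_inv[OF \<pi>]] by (auto dest: injD)
  show ?thesis
  proof (cases "m = x \<and> y \<in> I")
    case True
    have "inv ?\<pi>' y \<le> inv ?\<pi>' h" if "h \<in> I" for h
      using m(2)[of "Transposition.transpose x y h"] that True
      by (auto simp: inv_transpose_comp[OF bij] transpose_def)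
    then have "Or_perm ?\<pi>' I = y"
      using True Or_perm_eq_iff[OF \<pi>' I] by simp
    then show ?thesis
      using True m_def by simp
  next
    case False
    have "inv ?\<pi>' m < inv ?\<pi>' h" if "h \<in> I" "h \<noteq> m" for h
    proof -
      have "inv \<pi> m < inv \<pi> h"
        using m(2)[OF that(1)] inj[of m h] that(2) by simp
      moreover have "{m, h} \<noteq> {x, y}"
        using False that(1) calculation adj by (auto simp: doubleton_eq_iff)
      ultimately show ?thesis
        using transpose_adjacent_order[OF bij adj] by simp
    qed
    then have "Or_perm ?\<pi>' I = m"
      using m(1) Or_perm_eq_iff[OF \<pi>' I] by (metis less_imp_le order_refl)
    then show ?thesis
      using False m_def by auto
  qed
qed

definition Or_orientation :: "nat set set \<Rightarrow> (nat \<Rightarrow> nat) \<Rightarrow> nat set \<Rightarrow> nat" where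
  "Or_orientation HH \<pi> I = (if I \<in> HH then Or_perm \<pi> I else undefined)"

lemma Or_orientation_eq_fiber:
  assumes "orientation HH A" "\<pi> \<in> fiber n HH A"
  shows "Or_orientation HH \<pi> = A"
  using assms unfolding orientation_def fiber_def Or_orientation_def by fastforce

lemma sigma_of_eqI:
  assumes "\<pi> \<in> fiber n HH A" "\<And>\<rho>. \<rho> \<in> fiber n HH A \<Longrightarrow> weak_le n \<pi> \<rho>"
  shows "sigma_of n HH A = \<pi>"
  unfolding sigma_of_def using assms by (blast intro: weak_le_antisym)

lemma tau_of_eqI:
  assumes "\<pi> \<in> fiber n HH A" "\<And>\<rho>. \<rho> \<in> fiber n HH A \<Longrightarrow> weak_le n \<rho> \<pi>"
  shows "tau_of n HH A = \<pi>"
  unfolding tau_of_def using assms by (blast intro: weak_le_antisym)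

section \<open>Interval hypergraphs\<close>

locale interval_hg =
  fixes n :: nat and HH :: "nat set set"
  assumes interval_hypergraph: "interval_hypergraph n HH"
begin

lemma hyperedge_subset: "I \<in> HH \<Longrightarrow> I \<subseteq> {1..n}"
  using interval_hypergraph unfolding interval_hypergraph_def by fastforce

lemma hyperedge_nonempty: "I \<in> HH \<Longrightarrow> I \<noteq> {}"
  using interval_hypergraph unfolding interval_hypergraph_def by fastforce

lemma hyperedge_convex:
  assumes "I \<in> HH" "x \<in> I" "y \<in> I" "min x y \<le> z" "z \<le> max x y"
  shows "z \<in> I"
proof -
  obtain a b where "I = {a..b}"
    using assms(1) interval_hypergraph unfolding interval_hypergraph_def by blast
  then show ?thesis
    using assms(2-5) by (auto simp: min_def max_def split: if_splits)
qed

lemma prec_subset: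
  assumes "orientation HH A"
  shows "prec HH A \<subseteq> {1..n} \<times> {1..n}"
proof -
  have "arcs HH A \<subseteq> {1..n} \<times> {1..n}"
    using assms hyperedge_subset unfolding orientation_def by (fastforce elim: arcsE)
  then show ?thesis
    unfolding prec_eq_trancl_arcs by (rule trancl_subset_Sigma)
qed

lemma arcs_convex:
  assumes "orientation HH A" "(x, y) \<in> arcs HH A" "min x y < z" "z < max x y"
  shows "(x, z) \<in> arcs HH A"
proof -
  obtain I where I: "I \<in> HH" "x = A I" "y \<in> I"
    using assms(2) by (auto elim: arcsE)
  then have "x \<in> I"
    using assms(1) unfolding orientation_def by simp
  then have "z \<in> I"
    using hyperedge_convex[OF I(1) _ I(3)] assms(3,4) by simp
  then show ?thesis
    using I assms(3,4) by (auto intro: arcsI)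
qed

lemma prec_convex:
  assumes A: "orientation HH A" and xy: "(x, y) \<in> prec HH A"
  shows "min x y < z \<Longrightarrow> z < max x y \<Longrightarrow> (x, z) \<in> prec HH A"
  using xy unfolding prec_eq_trancl_arcs
proof (induction arbitrary: z rule: trancl_induct)
  case (base y)
  then show ?case
    using arcs_convex[OF A] by blast
next
  case (step y w)
  have "z = y \<or> min x y < z \<and> z < max x y \<or> min y w < z \<and> z < max y w"
    using step.prems by (auto simp: min_def max_def split: if_splits)
  then consider "z = y" | "min x y < z" "z < max x y" | "min y w < z" "z < max y w"
    by blast
  then show ?case
  proof cases
    case 3
    then show ?thesis
      using arcs_convex[OF A step.hyps(2)] step.hyps(1) by (meson trancl_into_trancl)
  qed (use step in \<open>auto intro: trancl_into_trancl\<close>)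
qed

lemma Or_perm_eq_on_hyperedges_iff:
  assumes A: "orientation HH A" and \<pi>: "\<pi> permutes {1..n}"
  shows "(\<forall>I\<in>HH. Or_perm \<pi> I = A I) \<longleftrightarrow> (\<forall>(x, y) \<in> arcs HH A. inv \<pi> x < inv \<pi> y)"
proof -
  have inj: "inv \<pi> a = inv \<pi> b \<longleftrightarrow> a = b" for a b
    using permutes_inj[OF permutes_inv[OF \<pi>]] by (auto dest: injD)
  have "Or_perm \<pi> I = A I \<longleftrightarrow> (\<forall>h\<in>I. inv \<pi> (A I) \<le> inv \<pi> h)" if "I \<in> HH" for I
  proof -
    have "A I \<in> I"
      using A that unfolding orientation_def by blast
    then show ?thesis
      using Or_perm_eq_iff[OF \<pi> hyperedge_subset[OF that] hyperedge_nonempty[OF that]] by blast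
  qed
  then have "(\<forall>I\<in>HH. Or_perm \<pi> I = A I) \<longleftrightarrow> (\<forall>I\<in>HH. \<forall>h\<in>I. inv \<pi> (A I) \<le> inv \<pi> h)"
    by blast
  also have "\<dots> \<longleftrightarrow> (\<forall>(x, y) \<in> arcs HH A. inv \<pi> x < inv \<pi> y)"
  proof
    assume first: "\<forall>I\<in>HH. \<forall>h\<in>I. inv \<pi> (A I) \<le> inv \<pi> h"
    show "\<forall>(x, y) \<in> arcs HH A. inv \<pi> x < inv \<pi> y"
    proof clarify
      fix x y assume "(x, y) \<in> arcs HH A"
      then obtain I where "I \<in> HH" "x = A I" "y \<in> I" "y \<noteq> A I"
        by (rule arcsE)
      then show "inv \<pi> x < inv \<pi> y"
        using first inj[of x y] by force
    qed
  next
    assume arcs: "\<forall>(x, y) \<in> arcs HH A. inv \<pi> x < inv \<pi> y"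
    show "\<forall>I\<in>HH. \<forall>h\<in>I. inv \<pi> (A I) \<le> inv \<pi> h"
    proof (intro ballI)
      fix I h assume "I \<in> HH" "h \<in> I"
      then show "inv \<pi> (A I) \<le> inv \<pi> h"
        using arcs arcsI[of I HH h A] by (cases "h = A I") auto
    qed
  qed
  finally show ?thesis .
qed

lemma fiber_iff:
  assumes A: "orientation HH A"
  shows "\<pi> \<in> fiber n HH A \<longleftrightarrow> \<pi> permutes {1..n} \<and> (\<forall>(x, y) \<in> prec HH A. inv \<pi> x < inv \<pi> y)"
proof (cases "\<pi> permutes {1..n}")
  case \<pi>: True
  let ?before = "{(x, y). inv \<pi> x < inv \<pi> y}"
  have "trans ?before"
    by (auto intro: transI)
  then have "arcs HH A \<subseteq> ?before \<longleftrightarrow> prec HH A \<subseteq> ?before"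
    using trancl_mono_subset[of "arcs HH A" ?before] trancl_incr[of "arcs HH A"]
    unfolding prec_eq_trancl_arcs by auto
  then show ?thesis
    using Or_perm_eq_on_hyperedges_iff[OF A \<pi>] \<pi> unfolding fiber_def by auto
qed (simp add: fiber_def)

lemma acyclic_Or_orientation:
  assumes \<pi>: "\<pi> permutes {1..n}"
  shows "acyclic_orientation HH (Or_orientation HH \<pi>)"
proof -
  have "Or_perm \<pi> I \<in> I" if "I \<in> HH" for I
    using Or_perm_eq_iff[OF \<pi> hyperedge_subset[OF that] hyperedge_nonempty[OF that]] by blast
  then have orient: "orientation HH (Or_orientation HH \<pi>)"
    unfolding orientation_def Or_orientation_def by simp
  moreover have "\<pi> \<in> fiber n HH (Or_orientation HH \<pi>)"
    using \<pi> unfolding fiber_def Or_orientation_def by simp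
  ultimately show ?thesis
    using fiber_iff[OF orient] by (auto intro!: acyclic_orientationI)
qed

lemma P_le_transpose_adjacent:
  assumes \<pi>: "\<pi> permutes {1..n}" and xy: "x \<in> {1..n}" "y \<in> {1..n}" "x < y"
    and adj: "inv \<pi> y = Suc (inv \<pi> x)"
  shows "P_le n HH (Or_orientation HH \<pi>) (Or_orientation HH (Transposition.transpose x y \<circ> \<pi>))"
proof -
  let ?\<pi>' = "Transposition.transpose x y \<circ> \<pi>"
  let ?A = "Or_orientation HH \<pi>" and ?A' = "Or_orientation HH ?\<pi>'"
  have \<pi>': "?\<pi>' permutes {1..n}"
    by (rule permutes_compose[OF \<pi> permutes_swap_id[OF xy(1,2)]])
  have swap: "?A' H = (if ?A H = x \<and> y \<in> H then y else ?A H)" if "H \<in> HH" for H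
    using Or_perm_transpose_adjacent[OF \<pi> xy(1,2) adj hyperedge_subset[OF that]
        hyperedge_nonempty[OF that]] that
    unfolding Or_orientation_def by simp
  have not_first: "?A H \<noteq> y" if "H \<in> HH" "x \<in> H" for H
  proof -
    have "inv \<pi> (Or_perm \<pi> H) \<le> inv \<pi> x"
      using Or_perm_eq_iff[OF \<pi> hyperedge_subset[OF that(1)] hyperedge_nonempty[OF that(1)]] that(2)
      by blast
    then show ?thesis
      using that(1) adj unfolding Or_orientation_def by auto
  qed
  have "\<forall>H\<in>HH. (?A H \<noteq> ?A' H \<longrightarrow> ?A H = x \<and> ?A' H = y)
      \<and> ({x, y} \<subseteq> H \<longrightarrow> (?A H = x \<longleftrightarrow> ?A' H = y))"
    using swap not_first by auto
  then have "?A' = ?A \<or> increasing_flip n HH ?A ?A'"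
    unfolding increasing_flip_def using xy by auto
  then show ?thesis
    unfolding P_le_def using acyclic_Or_orientation[OF \<pi>] acyclic_Or_orientation[OF \<pi>'] by auto
qed

lemma obtain_P_le_step:
  assumes \<pi>: "\<pi> permutes {1..n}" and \<rho>: "\<rho> permutes {1..n}"
    and sub: "inversions \<pi> \<subset> inversions \<rho>"
  obtains \<pi>' where "\<pi>' permutes {1..n}"
    "inversions \<pi> \<subset> inversions \<pi>'" "inversions \<pi>' \<subseteq> inversions \<rho>"
    "P_le n HH (Or_orientation HH \<pi>) (Or_orientation HH \<pi>')"
proof -
  obtain x y where xy: "x < y" "inv \<pi> y = Suc (inv \<pi> x)"
    "(x, y) \<in> inversions \<rho>" "(x, y) \<notin> inversions \<pi>"
    using obtain_adjacent_inversion[OF \<pi> \<rho> sub] by blast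
  have xy_in: "x \<in> {1..n}" "y \<in> {1..n}"
    using xy(3) inversions_subset[OF \<rho>] by auto
  let ?\<pi>' = "Transposition.transpose x y \<circ> \<pi>"
  have inv_\<pi>': "inversions ?\<pi>' = insert (x, y) (inversions \<pi>)"
    using inversions_transpose_adjacent[OF permutes_bij[OF \<pi>] xy(1,2)] .
  show ?thesis
  proof (rule that)
    show "?\<pi>' permutes {1..n}"
      by (rule permutes_compose[OF \<pi> permutes_swap_id[OF xy_in]])
    show "inversions \<pi> \<subset> inversions ?\<pi>'"
      using inv_\<pi>' xy(4) by auto
    show "inversions ?\<pi>' \<subseteq> inversions \<rho>"
      using inv_\<pi>' sub xy(3) by simp
    show "P_le n HH (Or_orientation HH \<pi>) (Or_orientation HH ?\<pi>')"
      by (rule P_le_transpose_adjacent[OF \<pi> xy_in xy(1,2)])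
  qed
qed

lemma P_le_Or_orientation:
  assumes \<pi>: "\<pi> permutes {1..n}" and \<rho>: "\<rho> permutes {1..n}"
    and sub: "inversions \<pi> \<subseteq> inversions \<rho>"
  shows "P_le n HH (Or_orientation HH \<pi>) (Or_orientation HH \<rho>)"
  using \<pi> sub
proof (induction "card (inversions \<rho> - inversions \<pi>)" arbitrary: \<pi> rule: less_induct)
  case less
  show ?case
  proof (cases "inversions \<pi> = inversions \<rho>")
    case True
    then show ?thesis
      using permutes_eqI_inversions[OF less.prems(1) \<rho>] unfolding P_le_def by simp
  next
    case False
    then obtain \<pi>' where \<pi>': "\<pi>' permutes {1..n}" "inversions \<pi> \<subset> inversions \<pi>'"
      "inversions \<pi>' \<subseteq> inversions \<rho>" "P_le n HH (Or_orientation HH \<pi>) (Or_orientation HH \<pi>')"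
      using obtain_P_le_step[OF less.prems(1) \<rho>] less.prems(2) by blast
    have "finite (inversions \<rho> - inversions \<pi>)"
      using inversions_subset[OF \<rho>] finite_subset by blast
    moreover have "inversions \<rho> - inversions \<pi>' \<subset> inversions \<rho> - inversions \<pi>"
      using \<pi>'(2,3) by blast
    ultimately have "card (inversions \<rho> - inversions \<pi>') < card (inversions \<rho> - inversions \<pi>)"
      by (simp add: psubset_card_mono)
    then have "P_le n HH (Or_orientation HH \<pi>') (Or_orientation HH \<rho>)"
      using less.hyps \<pi>'(1,3) by blast
    with \<pi>'(4) show ?thesis
      unfolding P_le_def by (rule rtrancl_trans)
  qed
qed

lemma obtain_linear_extension_tiebreak:
  assumes A: "acyclic_orientation HH A" and R: "R = {(a, b). a < b} \<or> R = {(a, b). b < a}"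
  obtains \<pi> where "\<pi> \<in> fiber n HH A"
    and "\<And>x y. x \<in> {1..n} \<Longrightarrow> y \<in> {1..n} \<Longrightarrow>
      inv \<pi> x < inv \<pi> y \<longleftrightarrow> (x, y) \<in> prec HH A \<union> (R - (prec HH A)\<inverse>)"
proof -
  let ?P = "prec HH A"
  have orient: "orientation HH A"
    using A unfolding acyclic_orientation_def by simp
  have "strict_linear_order R"
    using R unfolding strict_linear_order_on_def irrefl_def total_on_def trans_def by auto
  moreover have "trans ?P"
    unfolding prec_eq_trancl_arcs by (rule trans_trancl)
  moreover have "irrefl ?P"
    using prec_irrefl[OF A] unfolding irrefl_def by blast
  moreover have "(a, c) \<in> ?P" if "(a, b) \<in> ?P" "(a, c) \<in> R \<and> (c, b) \<in> R \<or> (b, c) \<in> R \<and> (c, a) \<in> R"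
    for a b c
    using prec_convex[OF orient that(1)] that(2) R by auto
  ultimately have "strict_linear_order (?P \<union> (R - ?P\<inverse>))"
    by (rule strict_linear_order_tiebreak)
  then have "strict_linear_order_on {1..n} (?P \<union> (R - ?P\<inverse>))"
    unfolding strict_linear_order_on_def using total_on_subset by blast
  then obtain \<pi> where \<pi>: "\<pi> permutes {1..n}"
    and order: "\<And>x y. x \<in> {1..n} \<Longrightarrow> y \<in> {1..n} \<Longrightarrow>
      inv \<pi> x < inv \<pi> y \<longleftrightarrow> (x, y) \<in> ?P \<union> (R - ?P\<inverse>)"
    using permutes_of_strict_linear_order by blast
  have "\<pi> \<in> fiber n HH A"
    unfolding fiber_iff[OF orient] using \<pi> order prec_subset[OF orient] by blast
  then show ?thesis
    using that order by blast
qed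

lemma fiber_inversions_bounds:
  assumes A: "orientation HH A" and \<rho>: "\<rho> \<in> fiber n HH A"
  shows "{(a, b). a < b \<and> (b, a) \<in> prec HH A} \<subseteq> inversions \<rho>"
    and "inversions \<rho> \<subseteq> {(a, b). a \<in> {1..n} \<and> b \<in> {1..n} \<and> a < b \<and> (a, b) \<notin> prec HH A}"
proof -
  have perm: "\<rho> permutes {1..n}" and ext: "\<forall>(x, y)\<in>prec HH A. inv \<rho> x < inv \<rho> y"
    using \<rho> unfolding fiber_iff[OF A] by auto
  then show "{(a, b). a < b \<and> (b, a) \<in> prec HH A} \<subseteq> inversions \<rho>"
    unfolding inversions_def by auto
  show "inversions \<rho> \<subseteq> {(a, b). a \<in> {1..n} \<and> b \<in> {1..n} \<and> a < b \<and> (a, b) \<notin> prec HH A}"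
  proof (rule subrelI)
    fix a b assume ab: "(a, b) \<in> inversions \<rho>"
    then have "a \<in> {1..n}" "b \<in> {1..n}"
      using inversions_subset[OF perm] by auto
    moreover have "a < b" "(a, b) \<notin> prec HH A"
      using ab ext unfolding inversions_def by auto
    ultimately show "(a, b) \<in> {(a, b). a \<in> {1..n} \<and> b \<in> {1..n} \<and> a < b \<and> (a, b) \<notin> prec HH A}"
      by simp
  qed
qed

lemma sigma_of_fiber_inversions:
  assumes A: "acyclic_orientation HH A"
  shows "sigma_of n HH A \<in> fiber n HH A"
    and "inversions (sigma_of n HH A) = {(a, b). a < b \<and> (b, a) \<in> prec HH A}"
proof -
  have orient: "orientation HH A"
    using A unfolding acyclic_orientation_def by simp
  obtain \<pi> where \<pi>: "\<pi> \<in> fiber n HH A"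
    and order: "\<And>x y. x \<in> {1..n} \<Longrightarrow> y \<in> {1..n} \<Longrightarrow>
      inv \<pi> x < inv \<pi> y \<longleftrightarrow> (x, y) \<in> prec HH A \<union> ({(a, b). a < b} - (prec HH A)\<inverse>)"
    using obtain_linear_extension_tiebreak[OF A] by blast
  have "(a, b) \<in> inversions \<pi> \<longleftrightarrow> a < b \<and> (b, a) \<in> prec HH A" for a b
  proof (cases "a \<in> {1..n} \<and> b \<in> {1..n}")
    case True
    then show ?thesis
      using order[of b a] unfolding inversions_def by auto
  next
    case False
    then show ?thesis
      using fiber_inversions_bounds[OF orient \<pi>] prec_subset[OF orient] by blast
  qed
  then have inv_\<pi>: "inversions \<pi> = {(a, b). a < b \<and> (b, a) \<in> prec HH A}"
    by auto
  have "sigma_of n HH A = \<pi>"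
  proof (rule sigma_of_eqI[OF \<pi>])
    show "weak_le n \<pi> \<rho>" if "\<rho> \<in> fiber n HH A" for \<rho>
      using that \<pi> fiber_inversions_bounds(1)[OF orient that] unfolding weak_le_def fiber_def inv_\<pi>
      by simp
  qed
  with \<pi> inv_\<pi> show "sigma_of n HH A \<in> fiber n HH A"
    and "inversions (sigma_of n HH A) = {(a, b). a < b \<and> (b, a) \<in> prec HH A}"
    by simp_all
qed

lemma tau_of_fiber_inversions:
  assumes A: "acyclic_orientation HH A"
  shows "tau_of n HH A \<in> fiber n HH A"
    and "inversions (tau_of n HH A)
      = {(a, b). a \<in> {1..n} \<and> b \<in> {1..n} \<and> a < b \<and> (a, b) \<notin> prec HH A}"
proof -
  have orient: "orientation HH A"
    using A unfolding acyclic_orientation_def by simp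
  obtain \<pi> where \<pi>: "\<pi> \<in> fiber n HH A"
    and order: "\<And>x y. x \<in> {1..n} \<Longrightarrow> y \<in> {1..n} \<Longrightarrow>
      inv \<pi> x < inv \<pi> y \<longleftrightarrow> (x, y) \<in> prec HH A \<union> ({(a, b). b < a} - (prec HH A)\<inverse>)"
    using obtain_linear_extension_tiebreak[OF A] by blast
  have asym: "(a, b) \<notin> prec HH A" if "(b, a) \<in> prec HH A" for a b
    using that prec_irrefl[OF A] unfolding prec_eq_trancl_arcs by (meson trancl_trans)
  have "(a, b) \<in> inversions \<pi> \<longleftrightarrow> a \<in> {1..n} \<and> b \<in> {1..n} \<and> a < b \<and> (a, b) \<notin> prec HH A"
    for a b
  proof (cases "a \<in> {1..n} \<and> b \<in> {1..n}")
    case True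
    then show ?thesis
      using order[of b a] asym[of b a] unfolding inversions_def by auto
  next
    case False
    then show ?thesis
      using fiber_inversions_bounds(2)[OF orient \<pi>] by blast
  qed
  then have inv_\<pi>: "inversions \<pi> = {(a, b). a \<in> {1..n} \<and> b \<in> {1..n} \<and> a < b \<and> (a, b) \<notin> prec HH A}"
    by auto
  have "tau_of n HH A = \<pi>"
  proof (rule tau_of_eqI[OF \<pi>])
    show "weak_le n \<rho> \<pi>" if "\<rho> \<in> fiber n HH A" for \<rho>
      using that \<pi> fiber_inversions_bounds(2)[OF orient that] unfolding weak_le_def fiber_def inv_\<pi>
      by simp
  qed
  with \<pi> inv_\<pi> show "tau_of n HH A \<in> fiber n HH A"
    and "inversions (tau_of n HH A)
      = {(a, b). a \<in> {1..n} \<and> b \<in> {1..n} \<and> a < b \<and> (a, b) \<notin> prec HH A}"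
    by simp_all
qed

lemma weak_le_sigma_tau_iff:
  assumes A: "acyclic_orientation HH A" and B: "acyclic_orientation HH B"
  shows "weak_le n (sigma_of n HH A) (tau_of n HH B) \<longleftrightarrow>
    (\<forall>i j. 1 \<le> i \<and> i < j \<and> j \<le> n \<longrightarrow> (j, i) \<in> prec HH A \<longrightarrow> (i, j) \<notin> prec HH B)"
proof -
  have "sigma_of n HH A permutes {1..n}" "tau_of n HH B permutes {1..n}"
    using sigma_of_fiber_inversions(1)[OF A] tau_of_fiber_inversions(1)[OF B]
    unfolding fiber_def by auto
  moreover have "prec HH A \<subseteq> {1..n} \<times> {1..n}"
    using A prec_subset unfolding acyclic_orientation_def by blast
  ultimately show ?thesis
    unfolding weak_le_def sigma_of_fiber_inversions(2)[OF A] tau_of_fiber_inversions(2)[OF B]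
    by auto
qed

lemma P_le_if_weak_le_sigma_tau:
  assumes A: "acyclic_orientation HH A" and B: "acyclic_orientation HH B"
    and le: "weak_le n (sigma_of n HH A) (tau_of n HH B)"
  shows "P_le n HH A B"
proof -
  have "P_le n HH (Or_orientation HH (sigma_of n HH A)) (Or_orientation HH (tau_of n HH B))"
    using le unfolding weak_le_def by (blast intro: P_le_Or_orientation)
  moreover have "Or_orientation HH (sigma_of n HH A) = A" "Or_orientation HH (tau_of n HH B) = B"
    using Or_orientation_eq_fiber sigma_of_fiber_inversions(1)[OF A]
      tau_of_fiber_inversions(1)[OF B] A B unfolding acyclic_orientation_def by blast+
  ultimately show ?thesis
    by simp
qed

lemma obtain_crossing_hyperedge:
  assumes A: "orientation HH A" and xy: "(x, y) \<in> prec HH A" and ij: "i < j"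
    and gap: "\<And>m. i < m \<Longrightarrow> m < j \<Longrightarrow> (m, y) \<notin> prec HH A"
    and side: "X = {..i} \<or> X = {j..}" and x: "x \<in> X" and y: "y \<notin> X" "y \<notin> {i<..<j}"
  obtains H where "H \<in> HH" "i \<in> H" "j \<in> H" "(x, A H) \<in> (arcs HH A)\<^sup>*" "A H \<in> X"
proof -
  obtain u v where uv: "(x, u) \<in> (arcs HH A)\<^sup>*" "(u, v) \<in> arcs HH A" "(v, y) \<in> (arcs HH A)\<^sup>*"
    "u \<in> X" "v \<notin> X"
    using trancl_exit_set[OF xy[unfolded prec_eq_trancl_arcs] x y(1)] by blast
  have "v \<notin> {i<..<j}"
  proof
    assume v: "v \<in> {i<..<j}"
    then have "(v, y) \<in> (arcs HH A)\<^sup>+"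
      using y(2) uv(3) by (auto simp: rtrancl_eq_or_trancl)
    then show False
      using gap v unfolding prec_eq_trancl_arcs by simp
  qed
  then have between: "min u v \<le> i" "j \<le> max u v"
    using side uv(4,5) ij by auto
  obtain H where H: "H \<in> HH" "u = A H" "v \<in> H"
    using uv(2) by (auto elim: arcsE)
  then have "u \<in> H"
    using A unfolding orientation_def by simp
  then have "i \<in> H" "j \<in> H"
    using hyperedge_convex[OF H(1) _ H(3)] between ij by simp_all
  then show ?thesis
    using that H uv(1,4) by auto
qed

lemma no_opposite_prec_pairs:
  assumes ci: "closed_under_intersection HH"
    and A: "acyclic_orientation HH A" and B: "acyclic_orientation HH B"
    and le: "\<forall>I\<in>HH. A I \<le> B I" and ij: "i < j" "(j, i) \<in> prec HH A"
  shows "(i, j) \<notin> prec HH B"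
  using ij
proof (induction "j - i" arbitrary: i j rule: less_induct)
  case less
  have orientA: "orientation HH A" and orientB: "orientation HH B"
    using A B unfolding acyclic_orientation_def by simp_all
  show ?case
  proof
    assume ij_B: "(i, j) \<in> prec HH B"
    \<comment> \<open>By convexity, a letter strictly between i and j would give a closer opposite pair.\<close>
    have gapA: "(m, i) \<notin> prec HH A" if "i < m" "m < j" for m
    proof
      assume "(m, i) \<in> prec HH A"
      moreover have "(i, m) \<in> prec HH B"
        using prec_convex[OF orientB ij_B] that by simp
      ultimately show False
        using less.hyps[of m i] that by simp
    qed
    have gapB: "(m, j) \<notin> prec HH B" if "i < m" "m < j" for m
    proof
      assume "(m, j) \<in> prec HH B"
      moreover have "(j, m) \<in> prec HH A"
        using prec_convex[OF orientA less.prems(2)] that by simp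
      ultimately show False
        using less.hyps[of j m] that by simp
    qed
    obtain H where H: "H \<in> HH" "i \<in> H" "j \<in> H" "(j, A H) \<in> (arcs HH A)\<^sup>*" "j \<le> A H"
      using obtain_crossing_hyperedge[OF orientA less.prems(2) less.prems(1) gapA, of "{j..}"]
        less.prems(1) by auto
    obtain K where K: "K \<in> HH" "i \<in> K" "j \<in> K" "(i, B K) \<in> (arcs HH B)\<^sup>*" "B K \<le> i"
      using obtain_crossing_hyperedge[OF orientB ij_B less.prems(1) gapB, of "{..i}"]
        less.prems(1) by auto
    obtain L where "L \<in> HH" "B L \<le> i" "j \<le> A L"
      using obtain_separating_hyperedge[OF ci A B H(1,4,5) K(1,4,5)] H(2,3) K(2,3) by blast
    then show False
      using le less.prems(1) by fastforce
  qed
qed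

end

theorem theorem4p9:
  fixes n :: nat and \<I> :: "nat set set" and A B :: "nat set \<Rightarrow> nat"
  assumes "interval_hypergraph n \<I>"
    and "closed_under_intersection \<I>"
    and "acyclic_orientation \<I> A"
    and "acyclic_orientation \<I> B"
  shows "(P_le n \<I> A B \<longleftrightarrow> (\<forall>I\<in>\<I>. A I \<le> B I))
       \<and> ((\<forall>I\<in>\<I>. A I \<le> B I) \<longleftrightarrow> weak_le n (sigma_of n \<I> A) (tau_of n \<I> B))
       \<and> (weak_le n (sigma_of n \<I> A) (tau_of n \<I> B) \<longleftrightarrow>
            (\<forall>i j. 1 \<le> i \<and> i < j \<and> j \<le> n \<longrightarrow> (j, i) \<in> prec \<I> A \<longrightarrow> (i, j) \<notin> prec \<I> B))"
proof -
  interpret interval_hg n \<I>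
    by (rule interval_hg.intro) (rule assms(1))
  have "P_le n \<I> A B \<Longrightarrow> \<forall>I\<in>\<I>. A I \<le> B I"
    using P_le_imp_le by blast
  moreover have "\<forall>I\<in>\<I>. A I \<le> B I \<Longrightarrow>
      \<forall>i j. 1 \<le> i \<and> i < j \<and> j \<le> n \<longrightarrow> (j, i) \<in> prec \<I> A \<longrightarrow> (i, j) \<notin> prec \<I> B"
    using no_opposite_prec_pairs[OF assms(2-4)] by blast
  moreover note weak_le_sigma_tau_iff[OF assms(3,4)]
  moreover have "weak_le n (sigma_of n \<I> A) (tau_of n \<I> B) \<Longrightarrow> P_le n \<I> A B"
    by (rule P_le_if_weak_le_sigma_tau[OF assms(3,4)])
  ultimately show ?thesis
    by blast
qed

end
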